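(* Let $m\ge 1$ and $\epsilon_L>0$. Fix a list of $2m$ spatial points $p_1,\dots,p_{2m}$ (the selected point list assigned to a trajectory). For a trajectory $\tau$ (a finite sequence of spatial points), let $f_k$ denote the number of occurrences of $p_k$ in $\tau$. The local perturbation mechanism $\mathcal{M}$ applied to $\tau$ outputs the vector $(f_1^*,\dots,f_{2m}^* )$ computed as follows. Stage 1: for $k=1,\dots,m$, sample $\eta\sim Lap(-f_k,1/\epsilon_L)$, set $f_k^*=\max(\mathrm{RoundInt}(f_k+\eta),0)$; then set $\bar\mu=\frac1m\sum_{k=1}^m (f_k^*-f_k)$. Stage 2: for $k=m+1,\dots,2m$, sample $\eta\sim Lap(-\bar\mu,1/\epsilon_L)$ and set $f_k^*=\max(\mathrm{RoundInt}(f_k+\eta),0)$. All Laplace samples are drawn independently (given the quantities they depend on). Then $\mathcal{M}$ provides $\epsilon_L$-differential privacy to a trajectory $\tau$, i.e. for any two adjacent trajectories $\tau,\tau'$ (differing in at most one point) and any output $\tilde\tau$, $\Pr[\mathcal{M}(\tau)=\tilde\tau]\le e^{\epsilon_L}\Pr[\mathcal{M}(\tau')=\tilde\tau]$.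
   Context: $Lap(\mu,\lambda)$ denotes the Laplace distribution with mean $\mu$ and scale $\lambda$, density $\frac{1}{2\lambda}\exp(-|x-\mu|/\lambda)$. $\mathrm{RoundInt}$ rounds a real number to the nearest integer. Two trajectories are adjacent if they differ in at most one point, so that their occurrence-count vectors $(f_1,\dots,f_{2m})$ over the fixed points $p_1,\dots,p_{2m}$ differ by at most $1$ in $\ell_1$-norm. *)

theory Defs
  imports "HOL-Probability.Probability"
begin

definition lap_density :: "real \<Rightarrow> real \<Rightarrow> real \<Rightarrow> real" where
  "lap_density mu lam x = exp (- \<bar>x - mu\<bar> / lam) / (2 * lam)"

definition Lap :: "real \<Rightarrow> real \<Rightarrow> real measure" where
  "Lap mu lam = density lborel (\<lambda>x. ennreal (lap_density mu lam x))"

definition perturb :: "real \<Rightarrow> real \<Rightarrow> real \<Rightarrow> int measure" where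
  "perturb f mu lam = distr (Lap mu lam) (count_space UNIV) (\<lambda>eta. max (round (f + eta)) 0)"

fun indep_seq :: "'b measure list \<Rightarrow> 'b list measure" where
  "indep_seq [] = return (count_space UNIV) []"
| "indep_seq (M # Ms) =
     bind M (\<lambda>x. bind (indep_seq Ms) (\<lambda>xs. return (count_space UNIV) (x # xs)))"

text \<open>The local perturbation mechanism; p k is the point p_k (k = 1..2m);
  the output list is (f_1^*, ..., f_{2m}^*).\<close>
definition mech :: "nat \<Rightarrow> real \<Rightarrow> (nat \<Rightarrow> 'a) \<Rightarrow> 'a list \<Rightarrow> int list measure" where
  "mech m epsL p \<tau> =
    (let f = (\<lambda>k. real (count_list \<tau> (p k))); lam = 1 / epsL in
     bind (indep_seq (map (\<lambda>k. perturb (f k) (- f k) lam) [1..<m+1]))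
       (\<lambda>s1. let mu = (\<Sum>k=1..m. real_of_int (s1 ! (k - 1)) - f k) / real m in
          bind (indep_seq (map (\<lambda>k. perturb (f k) (- mu) lam) [m+1..<2*m+1]))
            (\<lambda>s2. return (count_space UNIV) (s1 @ s2))))"

definition differ_one_point :: "'a list \<Rightarrow> 'a list \<Rightarrow> bool" where
  "differ_one_point \<tau> \<tau>' \<longleftrightarrow>
     (\<exists>xs ys x. (\<tau> = xs @ ys \<and> \<tau>' = xs @ x # ys) \<or> (\<tau>' = xs @ ys \<and> \<tau> = xs @ x # ys)) \<or>
     (\<exists>xs ys x y. \<tau> = xs @ x # ys \<and> \<tau>' = xs @ y # ys) \<or> \<tau> = \<tau>'"

definition adjacent :: "nat \<Rightarrow> (nat \<Rightarrow> 'a) \<Rightarrow> 'a list \<Rightarrow> 'a list \<Rightarrow> bool" where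
  "adjacent m p \<tau> \<tau>' \<longleftrightarrow> differ_one_point \<tau> \<tau>' \<and>
     (\<Sum>k=1..2*m. \<bar>real (count_list \<tau> (p k)) - real (count_list \<tau>' (p k))\<bar>) \<le> 1"

end

theory Submission
  imports Defs
begin

(* Since f_k + Lap(-f_k) is Lap(0), the first stage has the same distribution for every
   trajectory, and all dependence on the trajectory sits in the second stage. Given the
   first-stage output, coordinate k of the second stage is a rounded Laplace sample centred
   at f_k - mu_bar, and replacing tau by tau' moves this centre by
   (f_k - f'_k) + (sum_{j<=m} (f_j - f'_j)) / m. Over the m second-stage coordinates these
   shifts sum in absolute value to at most sum_k |f_k - f'_k| <= 1. A shift by delta changes
   a Laplace density of scale 1/epsL by a factor of at most exp(epsL |delta|), rounding is
   post-processing, and independence multiplies the factors. *)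

lemma lap_density_le_exponential_mix:
  assumes "lam > 0"
  shows "lap_density mu lam x
    \<le> (exponential_density (1/lam) (x - mu) + exponential_density (1/lam) (mu - x)) / 2"
  using assms by (auto simp: lap_density_def exponential_density_def field_simps abs_if)

lemma borel_measurable_lap_density[measurable]: "lap_density mu lam \<in> borel_measurable borel"
  unfolding lap_density_def by simp

lemma sets_Lap[simp, measurable_cong]: "sets (Lap mu lam) = sets borel"
  by (simp add: Lap_def)

lemma space_Lap[simp]: "space (Lap mu lam) = UNIV"
  by (simp add: Lap_def)

lemma nn_integral_exponential_density_translate:
  assumes "l > 0"
  shows "(\<integral>\<^sup>+x. ennreal (exponential_density l (x - c)) \<partial>lborel) = 1"
    and "(\<integral>\<^sup>+x. ennreal (exponential_density l (c - x)) \<partial>lborel) = 1"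
proof -
  interpret prob_space "density lborel (exponential_density l)"
    using prob_space_exponential_density[OF assms] .
  have "(\<integral>\<^sup>+x. ennreal (exponential_density l x) \<partial>lborel) = 1"
    using emeasure_space_1 by (simp add: emeasure_density)
  then show "(\<integral>\<^sup>+x. ennreal (exponential_density l (x - c)) \<partial>lborel) = 1"
    and "(\<integral>\<^sup>+x. ennreal (exponential_density l (c - x)) \<partial>lborel) = 1"
    using nn_integral_real_affine[of "\<lambda>x. ennreal (exponential_density l x)" 1 "- c"]
      nn_integral_real_affine[of "\<lambda>x. ennreal (exponential_density l x)" "-1" c]
    by simp_all
qed

lemma subprob_space_Lap:
  assumes "lam > 0"
  shows "subprob_space (Lap mu lam)"
proof (rule subprob_spaceI)
  have "emeasure (Lap mu lam) (space (Lap mu lam)) = (\<integral>\<^sup>+x. ennreal (lap_density mu lam x) \<partial>lborel)"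
    by (simp add: Lap_def emeasure_density)
  also have "\<dots> \<le> (\<integral>\<^sup>+x. (ennreal (exponential_density (1/lam) (x - mu))
                         + ennreal (exponential_density (1/lam) (mu - x))) / 2 \<partial>lborel)"
  proof (rule nn_integral_mono)
    fix x
    let ?e1 = "exponential_density (1/lam) (x - mu)" and ?e2 = "exponential_density (1/lam) (mu - x)"
    have nonneg: "0 \<le> ?e1" "0 \<le> ?e2"
      using assms by (simp_all add: exponential_density_nonneg)
    have "ennreal (lap_density mu lam x) \<le> ennreal ((?e1 + ?e2) / 2)"
      using lap_density_le_exponential_mix[OF assms] by (rule ennreal_leI)
    also have "\<dots> = ennreal (?e1 + ?e2) / 2"
      by (rule ennreal_divide_numeral[symmetric]) (simp add: nonneg)
    also have "\<dots> = (ennreal ?e1 + ennreal ?e2) / 2"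
      using nonneg by simp
    finally show "ennreal (lap_density mu lam x) \<le> (ennreal ?e1 + ennreal ?e2) / 2" .
  qed
  also have "\<dots> = ((\<integral>\<^sup>+x. ennreal (exponential_density (1/lam) (x - mu)) \<partial>lborel)
                   + (\<integral>\<^sup>+x. ennreal (exponential_density (1/lam) (mu - x)) \<partial>lborel)) / 2"
    by (subst nn_integral_divide) (simp_all add: nn_integral_add)
  also have "\<dots> = 1"
    using assms by (simp add: nn_integral_exponential_density_translate)
  finally show "emeasure (Lap mu lam) (space (Lap mu lam)) \<le> 1" .
qed (simp add: Lap_def)

lemma lap_density_shift_le:
  assumes "lam > 0"
  shows "lap_density a lam t \<le> exp (\<bar>a - a'\<bar> / lam) * lap_density a' lam t"
proof -
  have "- \<bar>t - a\<bar> / lam \<le> \<bar>a - a'\<bar> / lam + - \<bar>t - a'\<bar> / lam"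
    using assms by (simp add: field_simps)
  then have "exp (- \<bar>t - a\<bar> / lam) \<le> exp (\<bar>a - a'\<bar> / lam) * exp (- \<bar>t - a'\<bar> / lam)"
    by (simp add: exp_add[symmetric])
  then show ?thesis
    using assms unfolding lap_density_def by (simp add: divide_right_mono)
qed

lemma emeasure_Lap_shift_le:
  assumes "lam > 0" and [measurable]: "A \<in> sets borel"
  shows "emeasure (Lap a lam) A \<le> ennreal (exp (\<bar>a - a'\<bar> / lam)) * emeasure (Lap a' lam) A"
proof -
  have pointwise: "ennreal (lap_density a lam t)
      \<le> ennreal (exp (\<bar>a - a'\<bar> / lam)) * ennreal (lap_density a' lam t)" for t
    using lap_density_shift_le[OF assms(1), of a t a'] by (simp add: ennreal_mult'[symmetric] ennreal_leI)
  have "emeasure (Lap a lam) A = (\<integral>\<^sup>+t. ennreal (lap_density a lam t) * indicator A t \<partial>lborel)"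
    by (simp add: Lap_def emeasure_density)
  also have "\<dots> \<le> (\<integral>\<^sup>+t. ennreal (exp (\<bar>a - a'\<bar> / lam))
                         * (ennreal (lap_density a' lam t) * indicator A t) \<partial>lborel)"
    using pointwise by (intro nn_integral_mono) (simp split: split_indicator)
  also have "\<dots> = ennreal (exp (\<bar>a - a'\<bar> / lam)) * emeasure (Lap a' lam) A"
    by (subst nn_integral_cmult) (simp_all add: Lap_def emeasure_density)
  finally show ?thesis .
qed

lemma distr_Lap_plus: "distr (Lap mu lam) borel ((+) c) = Lap (c + mu) lam"
proof -
  have "Lap (c + mu) lam = density (distr lborel borel ((+) c)) (\<lambda>x. ennreal (lap_density (c + mu) lam x))"
    by (simp add: Lap_def lborel_distr_plus)
  also have "\<dots> = distr (density lborel (\<lambda>x. ennreal (lap_density (c + mu) lam (c + x)))) borel ((+) c)"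
    by (rule density_distr) simp_all
  also have "(\<lambda>x. ennreal (lap_density (c + mu) lam (c + x))) = (\<lambda>x. ennreal (lap_density mu lam x))"
    by (simp add: lap_density_def)
  finally show ?thesis
    by (simp add: Lap_def)
qed

lemma measurable_round_nonneg[measurable]:
  "(\<lambda>t::real. max (round t) (0::int)) \<in> measurable borel (count_space UNIV)"
proof -
  have "(\<lambda>t::real. round t) \<in> measurable borel (count_space UNIV)"
    unfolding round_def by measurable
  then show ?thesis
    by (rule measurable_compose) simp
qed

lemma perturb_eq_distr_Lap:
  "perturb f mu lam = distr (Lap (f + mu) lam) (count_space UNIV) (\<lambda>t. max (round t) 0)"
proof -
  have "perturb f mu lam = distr (distr (Lap mu lam) borel ((+) f)) (count_space UNIV) (\<lambda>t. max (round t) 0)"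
    unfolding perturb_def by (subst distr_distr) (simp_all add: comp_def)
  then show ?thesis
    by (simp add: distr_Lap_plus)
qed

lemma emeasure_perturb_le:
  assumes "lam > 0"
  shows "emeasure (perturb f mu lam) A
    \<le> ennreal (exp (\<bar>(f + mu) - (f' + mu')\<bar> / lam)) * emeasure (perturb f' mu' lam) A"
proof -
  have "(\<lambda>t::real. max (round t) (0::int)) -` A \<in> sets borel"
    using measurable_sets[OF measurable_round_nonneg, of A] by simp
  then show ?thesis
    using emeasure_Lap_shift_le[OF assms, of _ "f + mu" "f' + mu'"]
    by (simp add: perturb_eq_distr_Lap emeasure_distr)
qed

definition discrete_subprob :: "'b measure \<Rightarrow> bool" where
  "discrete_subprob M \<longleftrightarrow> subprob_space M \<and> sets M = sets (count_space UNIV)"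

lemma discrete_subprob_space: "discrete_subprob M \<Longrightarrow> space M = UNIV"
  unfolding discrete_subprob_def by (metis sets_eq_imp_space_eq space_count_space)

lemma discrete_subprob_measurable:
  "discrete_subprob M \<Longrightarrow> g \<in> measurable M N \<longleftrightarrow> g \<in> UNIV \<rightarrow> space N"
  unfolding discrete_subprob_def
  by (subst measurable_cong_sets[of M "count_space UNIV" N N]) simp_all

lemma discrete_subprob_return: "discrete_subprob (return (count_space UNIV) x)"
  by (simp add: discrete_subprob_def subprob_space_return)

lemma discrete_subprob_perturb: "lam > 0 \<Longrightarrow> discrete_subprob (perturb f mu lam)"
  unfolding discrete_subprob_def perturb_def
  by (auto intro: subprob_space.subprob_space_distr subprob_space_Lap)

lemma measurable_discrete_subprob_kernel:
  assumes "discrete_subprob M" and "\<And>x. discrete_subprob (K x)"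
  shows "K \<in> measurable M (subprob_algebra (count_space UNIV))"
  using assms by (simp add: discrete_subprob_measurable space_subprob_algebra discrete_subprob_def)

lemma discrete_subprob_bind:
  assumes "discrete_subprob M" and "\<And>x. discrete_subprob (K x)"
  shows "discrete_subprob (bind M K)"
proof -
  have "space M \<noteq> {}"
    using discrete_subprob_space[OF assms(1)] by simp
  then have "sets (bind M K) = sets (count_space UNIV)"
    using assms(2) by (intro sets_bind) (simp_all add: discrete_subprob_def)
  moreover have "subprob_space (bind M K)"
    using assms(1) measurable_discrete_subprob_kernel[OF assms]
    by (intro subprob_space_bind) (simp_all add: discrete_subprob_def)
  ultimately show ?thesis
    by (simp add: discrete_subprob_def)
qed

lemma discrete_subprob_indep_seq:
  "(\<And>M. M \<in> set Ms \<Longrightarrow> discrete_subprob M) \<Longrightarrow> discrete_subprob (indep_seq Ms)"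
  by (induction Ms) (auto intro!: discrete_subprob_bind discrete_subprob_return)

lemma emeasure_bind_discrete:
  assumes "discrete_subprob M" and "\<And>x. discrete_subprob (K x)"
  shows "emeasure (bind M K) A = (\<integral>\<^sup>+x. emeasure (K x) A \<partial>M)"
  using discrete_subprob_space[OF assms(1)]
  by (intro emeasure_bind[OF _ measurable_discrete_subprob_kernel[OF assms]]) simp_all

lemma emeasure_le_if_emeasure_singleton_le:
  fixes M N :: "'b::countable measure"
  assumes "sets M = sets (count_space UNIV)" and "sets N = sets (count_space UNIV)"
    and "\<And>x. emeasure M {x} \<le> C * emeasure N {x}"
  shows "emeasure M A \<le> C * emeasure N A"
proof -
  have "emeasure M A = (\<integral>\<^sup>+x. emeasure M {x} \<partial>count_space A)"
    using assms(1) by (intro emeasure_countable_singleton) simp_all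
  also have "\<dots> \<le> (\<integral>\<^sup>+x. C * emeasure N {x} \<partial>count_space A)"
    by (intro nn_integral_mono assms(3))
  also have "\<dots> = C * (\<integral>\<^sup>+x. emeasure N {x} \<partial>count_space A)"
    by (rule nn_integral_cmult) simp
  also have "(\<integral>\<^sup>+x. emeasure N {x} \<partial>count_space A) = emeasure N A"
    using assms(2) by (intro emeasure_countable_singleton[symmetric]) simp_all
  finally show ?thesis .
qed

lemma emeasure_bind_le_bind:
  assumes "discrete_subprob M" and "\<And>x. discrete_subprob (K x)" and "\<And>x. discrete_subprob (K' x)"
    and "\<And>x. emeasure (K x) A \<le> C * emeasure (K' x) A"
  shows "emeasure (bind M K) A \<le> C * emeasure (bind M K') A"
proof -
  have "emeasure (bind M K) A \<le> (\<integral>\<^sup>+x. C * emeasure (K' x) A \<partial>M)"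
    using assms(4) by (simp add: emeasure_bind_discrete assms(1,2) nn_integral_mono)
  also have "\<dots> = C * emeasure (bind M K') A"
    using assms(1) by (simp add: emeasure_bind_discrete assms(3) nn_integral_cmult discrete_subprob_measurable)
  finally show ?thesis .
qed

lemma emeasure_bind_return_le:
  assumes "discrete_subprob M" and "discrete_subprob N"
    and "\<And>A. emeasure M A \<le> C * emeasure N A"
  shows "emeasure (bind M (\<lambda>x. return (count_space UNIV) (g x))) B
    \<le> C * emeasure (bind N (\<lambda>x. return (count_space UNIV) (g x))) B"
proof -
  have "bind L (\<lambda>x. return (count_space UNIV) (g x)) = distr L (count_space UNIV) g"
    if "discrete_subprob L" for L
    using that by (intro bind_return_distr') (simp_all add: discrete_subprob_space discrete_subprob_measurable)
  then show ?thesis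
    using assms by (simp add: emeasure_distr discrete_subprob_measurable discrete_subprob_space)
qed

lemma emeasure_indep_seq_Cons_Nil:
  assumes "discrete_subprob M" and "\<And>N. N \<in> set Ms \<Longrightarrow> discrete_subprob N"
  shows "emeasure (indep_seq (M # Ms)) {[]} = 0"
proof -
  have "discrete_subprob (indep_seq Ms)"
    using assms(2) by (rule discrete_subprob_indep_seq)
  then show ?thesis
    using assms(1)
    by (simp add: emeasure_bind_discrete discrete_subprob_bind discrete_subprob_return)
qed

lemma emeasure_indep_seq_Cons_Cons:
  assumes "discrete_subprob M" and "\<And>N. N \<in> set Ms \<Longrightarrow> discrete_subprob N"
  shows "emeasure (indep_seq (M # Ms)) {z # zs} = emeasure M {z} * emeasure (indep_seq Ms) {zs}"
proof -
  have I: "discrete_subprob (indep_seq Ms)"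
    using assms(2) by (rule discrete_subprob_indep_seq)
  have tail: "emeasure (bind (indep_seq Ms) (\<lambda>xs. return (count_space UNIV) (x # xs))) {z # zs}
      = emeasure (indep_seq Ms) {zs} * indicator {z} x" for x
  proof -
    have "emeasure (bind (indep_seq Ms) (\<lambda>xs. return (count_space UNIV) (x # xs))) {z # zs}
        = (\<integral>\<^sup>+xs. indicator {z # zs} (x # xs) \<partial>indep_seq Ms)"
      using I by (simp add: emeasure_bind_discrete discrete_subprob_return)
    also have "\<dots> = (\<integral>\<^sup>+xs. indicator {z} x * indicator {zs} xs \<partial>indep_seq Ms)"
      by (intro nn_integral_cong) (simp split: split_indicator)
    also have "\<dots> = indicator {z} x * emeasure (indep_seq Ms) {zs}"
      using I by (intro nn_integral_cmult_indicator) (simp add: discrete_subprob_def)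
    finally show ?thesis
      by (simp add: mult.commute)
  qed
  have "emeasure (indep_seq (M # Ms)) {z # zs}
      = (\<integral>\<^sup>+x. emeasure (indep_seq Ms) {zs} * indicator {z} x \<partial>M)"
    using assms(1) I
    by (simp add: emeasure_bind_discrete discrete_subprob_bind discrete_subprob_return tail)
  also have "\<dots> = emeasure (indep_seq Ms) {zs} * emeasure M {z}"
    using assms(1) by (intro nn_integral_cmult_indicator) (simp add: discrete_subprob_def)
  finally show ?thesis
    by (simp add: mult.commute)
qed

lemma emeasure_indep_seq_map_le:
  assumes "\<And>k. k \<in> set ks \<Longrightarrow> discrete_subprob (M k)"
    and "\<And>k. k \<in> set ks \<Longrightarrow> discrete_subprob (N k)"
    and "\<And>k z. k \<in> set ks \<Longrightarrow> emeasure (M k) {z} \<le> ennreal (exp (c k)) * emeasure (N k) {z}"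
  shows "emeasure (indep_seq (map M ks)) {zs}
    \<le> ennreal (exp (\<Sum>k\<leftarrow>ks. c k)) * emeasure (indep_seq (map N ks)) {zs}"
  using assms
proof (induction ks arbitrary: zs)
  case Nil
  then show ?case
    by (simp split: split_indicator)
next
  case (Cons k ks)
  have M: "discrete_subprob (M k)" "\<And>L. L \<in> set (map M ks) \<Longrightarrow> discrete_subprob L"
    and N: "discrete_subprob (N k)" "\<And>L. L \<in> set (map N ks) \<Longrightarrow> discrete_subprob L"
    using Cons.prems(1,2) by auto
  consider "zs = []" | z zs' where "zs = z # zs'"
    by (cases zs) auto
  then show ?case
  proof cases
    case 1
    have "emeasure (indep_seq (M k # map M ks)) {[]} = 0"
      using M by (rule emeasure_indep_seq_Cons_Nil)
    then show ?thesis
      using 1 by (simp del: indep_seq.simps)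
  next
    case (2 z zs')
    have "emeasure (indep_seq (M k # map M ks)) {z # zs'}
        = emeasure (M k) {z} * emeasure (indep_seq (map M ks)) {zs'}"
      using M by (rule emeasure_indep_seq_Cons_Cons)
    then have "emeasure (indep_seq (map M (k # ks))) {zs}
        = emeasure (M k) {z} * emeasure (indep_seq (map M ks)) {zs'}"
      using 2 by (simp del: indep_seq.simps)
    also have "\<dots> \<le> (ennreal (exp (c k)) * emeasure (N k) {z})
                 * (ennreal (exp (\<Sum>k\<leftarrow>ks. c k)) * emeasure (indep_seq (map N ks)) {zs'})"
      using Cons.prems by (intro mult_mono Cons.IH) auto
    also have "\<dots> = ennreal (exp (\<Sum>k\<leftarrow>k # ks. c k))
                 * (emeasure (N k) {z} * emeasure (indep_seq (map N ks)) {zs'})"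
      by (simp add: exp_add ennreal_mult' mult_ac)
    also have "emeasure (N k) {z} * emeasure (indep_seq (map N ks)) {zs'}
        = emeasure (indep_seq (map N (k # ks))) {zs}"
      using emeasure_indep_seq_Cons_Cons[of "N k" "map N ks" z zs'] N 2 by (simp del: indep_seq.simps)
    finally show ?thesis .
  qed
qed

lemma sum_abs_add_mean_le:
  fixes d :: "nat \<Rightarrow> real"
  shows "(\<Sum>k=m+1..2*m. \<bar>d k + (\<Sum>j=1..m. d j) / real m\<bar>) \<le> (\<Sum>k=1..2*m. \<bar>d k\<bar>)"
proof (cases "m = 0")
  case False
  have "(\<Sum>k=m+1..2*m. \<bar>d k + (\<Sum>j=1..m. d j) / real m\<bar>)
      \<le> (\<Sum>k=m+1..2*m. \<bar>d k\<bar> + \<bar>\<Sum>j=1..m. d j\<bar> / real m)"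
    by (intro sum_mono) (simp add: abs_triangle_ineq[THEN order_trans])
  also have "\<dots> = (\<Sum>k=m+1..2*m. \<bar>d k\<bar>) + \<bar>\<Sum>j=1..m. d j\<bar>"
    using False by (simp add: sum.distrib)
  also have "\<dots> \<le> (\<Sum>k=m+1..2*m. \<bar>d k\<bar>) + (\<Sum>j=1..m. \<bar>d j\<bar>)"
    by (simp add: sum_abs)
  also have "\<dots> = (\<Sum>k=1..2*m. \<bar>d k\<bar>)"
    using sum.ub_add_nat[of 1 m "\<lambda>k. \<bar>d k\<bar>" m] by (simp add: mult_2)
  finally show ?thesis .
qed simp

(* mu_bar of the paper: s1 ! (k - 1) is the first-stage output f_k^*. *)
definition stage1_mean_noise :: "nat \<Rightarrow> (nat \<Rightarrow> real) \<Rightarrow> int list \<Rightarrow> real" where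
  "stage1_mean_noise m f s1 = (\<Sum>k=1..m. real_of_int (s1 ! (k - 1)) - f k) / real m"

definition stage2 :: "nat \<Rightarrow> real \<Rightarrow> (nat \<Rightarrow> real) \<Rightarrow> int list \<Rightarrow> int list measure" where
  "stage2 m lam f s1 =
     indep_seq (map (\<lambda>k. perturb (f k) (- stage1_mean_noise m f s1) lam) [m+1..<2*m+1])"

lemma discrete_subprob_stage2: "lam > 0 \<Longrightarrow> discrete_subprob (stage2 m lam f s1)"
  unfolding stage2_def
  by (intro discrete_subprob_indep_seq) (auto intro: discrete_subprob_perturb)

lemma mech_eq_bind_stage2:
  "mech m epsL p \<tau> =
    bind (indep_seq (replicate m (perturb 0 0 (1 / epsL))))
      (\<lambda>s1. bind (stage2 m (1 / epsL) (\<lambda>k. real (count_list \<tau> (p k))) s1)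
        (\<lambda>s2. return (count_space UNIV) (s1 @ s2)))"
proof -
  have stage1: "map (\<lambda>k. perturb (f k) (- f k) lam) [1..<m+1] = replicate m (perturb 0 0 lam)"
    for f :: "nat \<Rightarrow> real" and lam
    by (simp add: perturb_eq_distr_Lap map_replicate_const del: upt_Suc)
  show ?thesis
    unfolding mech_def Let_def stage2_def stage1_mean_noise_def stage1 ..
qed

lemma sum_abs_stage2_shift_le:
  "(\<Sum>k=m+1..2*m. \<bar>(f k + - stage1_mean_noise m f s1) - (f' k + - stage1_mean_noise m f' s1)\<bar>)
    \<le> (\<Sum>k=1..2*m. \<bar>f k - f' k\<bar>)"
proof -
  have "stage1_mean_noise m f' s1 - stage1_mean_noise m f s1 = (\<Sum>j=1..m. f j - f' j) / real m"
    unfolding stage1_mean_noise_def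
    by (simp add: diff_divide_distrib[symmetric] sum_subtractf[symmetric])
  then have shift: "(f k + - stage1_mean_noise m f s1) - (f' k + - stage1_mean_noise m f' s1)
      = (f k - f' k) + (\<Sum>j=1..m. f j - f' j) / real m" for k
    by (simp add: algebra_simps)
  show ?thesis
    unfolding shift by (rule sum_abs_add_mean_le)
qed

lemma emeasure_stage2_le:
  assumes "lam > 0"
  shows "emeasure (stage2 m lam f s1) A
    \<le> ennreal (exp ((\<Sum>k=1..2*m. \<bar>f k - f' k\<bar>) / lam)) * emeasure (stage2 m lam f' s1) A"
proof -
  let ?mu = "stage1_mean_noise m"
  define c where "c k = \<bar>(f k + - ?mu f s1) - (f' k + - ?mu f' s1)\<bar> / lam" for k
  have "{m+1..<2*m+1} = {m+1..2*m}"
    by auto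
  then have "(\<Sum>k\<leftarrow>[m+1..<2*m+1]. c k) = (\<Sum>k=m+1..2*m. c k)"
    by (simp only: sum_set_upt_conv_sum_list_nat[symmetric] set_upt)
  also have "\<dots> = (\<Sum>k=m+1..2*m. \<bar>(f k + - ?mu f s1) - (f' k + - ?mu f' s1)\<bar>) / lam"
    unfolding c_def by (rule sum_divide_distrib[symmetric])
  also have "\<dots> \<le> (\<Sum>k=1..2*m. \<bar>f k - f' k\<bar>) / lam"
    using assms by (intro divide_right_mono sum_abs_stage2_shift_le) simp
  finally have exp_le: "ennreal (exp (\<Sum>k\<leftarrow>[m+1..<2*m+1]. c k))
      \<le> ennreal (exp ((\<Sum>k=1..2*m. \<bar>f k - f' k\<bar>) / lam))"
    by (intro ennreal_leI) simp
  have singleton_le: "emeasure (stage2 m lam f s1) {zs}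
      \<le> ennreal (exp ((\<Sum>k=1..2*m. \<bar>f k - f' k\<bar>) / lam)) * emeasure (stage2 m lam f' s1) {zs}" for zs
  proof -
    have "emeasure (stage2 m lam f s1) {zs}
        \<le> ennreal (exp (\<Sum>k\<leftarrow>[m+1..<2*m+1]. c k)) * emeasure (stage2 m lam f' s1) {zs}"
      unfolding stage2_def
    proof (rule emeasure_indep_seq_map_le)
      fix k z
      show "emeasure (perturb (f k) (- ?mu f s1) lam) {z}
          \<le> ennreal (exp (c k)) * emeasure (perturb (f' k) (- ?mu f' s1) lam) {z}"
        unfolding c_def by (rule emeasure_perturb_le[OF assms])
    qed (use assms in \<open>simp_all add: discrete_subprob_perturb\<close>)
    also have "\<dots> \<le> ennreal (exp ((\<Sum>k=1..2*m. \<bar>f k - f' k\<bar>) / lam)) * emeasure (stage2 m lam f' s1) {zs}"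
      using exp_le by (rule mult_right_mono) simp
    finally show ?thesis .
  qed
  have sets_stage2: "sets (stage2 m lam g s1) = sets (count_space UNIV)" for g
    using discrete_subprob_stage2[OF assms] by (simp add: discrete_subprob_def)
  show ?thesis
    by (rule emeasure_le_if_emeasure_singleton_le[OF sets_stage2 sets_stage2 singleton_le])
qed

theorem theorem3:
  fixes m :: nat and epsL :: real and p :: "nat \<Rightarrow> 'a" and \<tau> \<tau>' :: "'a list"
    and out :: "int list"
  assumes "m \<ge> 1" and "epsL > 0"
    and "adjacent m p \<tau> \<tau>'"
  shows "emeasure (mech m epsL p \<tau>) {out} \<le> ennreal (exp epsL) * emeasure (mech m epsL p \<tau>') {out}"
proof -
  define f where "f = (\<lambda>k. real (count_list \<tau> (p k)))"
  define f' where "f' = (\<lambda>k. real (count_list \<tau>' (p k)))"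
  have lam: "1 / epsL > 0"
    using assms(2) by simp
  have "ennreal (exp ((\<Sum>k=1..2*m. \<bar>f k - f' k\<bar>) / (1 / epsL))) \<le> ennreal (exp epsL)"
    using assms(2,3) by (intro ennreal_leI) (simp add: adjacent_def f_def f'_def mult_le_cancel_right1)
  then have stage2_le: "emeasure (stage2 m (1 / epsL) f s1) A
      \<le> ennreal (exp epsL) * emeasure (stage2 m (1 / epsL) f' s1) A" for s1 A
    using emeasure_stage2_le[OF lam, of m f s1 A f'] by (meson order_trans mult_right_mono zero_le)
  have stage1: "discrete_subprob (indep_seq (replicate m (perturb 0 0 (1 / epsL))))"
    using discrete_subprob_perturb[OF lam] by (intro discrete_subprob_indep_seq) simp
  let ?K = "\<lambda>g s1. bind (stage2 m (1 / epsL) g s1) (\<lambda>s2. return (count_space UNIV) (s1 @ s2))"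
  have kernel: "discrete_subprob (?K g s1)" for g s1
    by (intro discrete_subprob_bind discrete_subprob_stage2[OF lam] discrete_subprob_return)
  have "emeasure (?K f s1) {out} \<le> ennreal (exp epsL) * emeasure (?K f' s1) {out}" for s1
    by (rule emeasure_bind_return_le[OF discrete_subprob_stage2[OF lam] discrete_subprob_stage2[OF lam] stage2_le])
  then show ?thesis
    unfolding mech_eq_bind_stage2 f_def[symmetric] f'_def[symmetric]
    by (rule emeasure_bind_le_bind[OF stage1 kernel kernel])
qed

end
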